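(* Let $X$ be a $t$-dependent vector field on $\mathbb{R}^{n_0}$ admitting a mixed superposition rule $(\Phi,X_{(1)},\dots,X_{(m)})$, $\Phi:\mathbb{R}^{n_1}\times\cdots\times\mathbb{R}^{n_m}\times\mathbb{R}^{n_0}\to\mathbb{R}^{n_0}$, where $X_{(1)},\dots,X_{(m)}$ are Lie systems on $\mathbb{R}^{n_1},\dots,\mathbb{R}^{n_m}$. Suppose that for some $k\in\mathbb{R}^{n_0}$ the map $\Phi_k:(x_{(1)},\dots,x_{(m)})\mapsto\Phi(x_{(1)},\dots,x_{(m)};k)$ has open and dense image in $\mathbb{R}^{n_0}$. Let $\widehat X=X_{(1)}\times\cdots\times X_{(m)}$. Then $\widehat X$ is a Lie system, every element of $V^{\widehat X}$ is $\Phi_k$-projectable (it is $\Phi_k$-related to a vector field on $\mathbb{R}^{n_0}$), and the tangent map of $\Phi_k$ induces a Lie algebra epimorphism $\Phi_{k*}:V^{\widehat X}\to V^X$; in particular $X^t=\Phi_{k*}\widehat X^t$ for all $t$.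
   Context: All objects are real and smooth. A $t$-dependent vector field $X$ on $\mathbb{R}^n$ is a smooth family $\{X^t\}_{t\in\mathbb{R}}$ of vector fields; its particular solutions are solutions of $dx/dt=X(t,x)$. $V^X={\rm Lie}(\{X^t\}_{t\in\mathbb{R}})$ is the smallest real Lie algebra of vector fields containing all $X^t$; $X$ is a Lie system iff $V^X$ is finite-dimensional. The direct product of $X_{(a)}$ on $\mathbb{R}^{n_a}$ is $\sum_a\sum_i X^i_{(a)}(t,x_{(a)})\partial/\partial x^i_{(a)}$ on the product space. A mixed superposition rule $(\Phi,X_{(1)},\dots,X_{(m)})$ for $X$: a $t$-independent map $\Phi$ such that the general solution of $X$ is $x(t)=\Phi(x_{(1)}(t),\dots,x_{(m)}(t);k)$ for a generic family of particular solutions $x_{(a)}(t)$ of $X_{(a)}$ and constants $k\in\mathbb{R}^{n_0}$ (with $k\mapsto\Phi(p;k)$ a local diffeomorphism for generic $p$). *)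

theory Defs
  imports "HOL-Analysis.Analysis"
begin

fun smooth_upto :: "nat \<Rightarrow> ('a::euclidean_space \<Rightarrow> 'b::euclidean_space) \<Rightarrow> bool" where
  "smooth_upto 0 f = True"
| "smooth_upto (Suc k) f =
     ((\<forall>x. f differentiable (at x)) \<and>
      (\<forall>v. smooth_upto k (\<lambda>x. frechet_derivative f (at x) v)))"

definition smooth :: "('a::euclidean_space \<Rightarrow> 'b::euclidean_space) \<Rightarrow> bool" where
  "smooth f \<longleftrightarrow> (\<forall>k. smooth_upto k f)"

definition vector_field :: "('a::euclidean_space \<Rightarrow> 'a) \<Rightarrow> bool" where
  "vector_field Y \<longleftrightarrow> smooth Y"

definition tdep_vector_field :: "(real \<Rightarrow> 'a::euclidean_space \<Rightarrow> 'a) \<Rightarrow> bool" where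
  "tdep_vector_field X \<longleftrightarrow> smooth (\<lambda>(t, x). X t x)"

definition lie_bracket :: "('a::euclidean_space \<Rightarrow> 'a) \<Rightarrow> ('a \<Rightarrow> 'a) \<Rightarrow> ('a \<Rightarrow> 'a)" where
  "lie_bracket Y Z = (\<lambda>x. frechet_derivative Z (at x) (Y x) - frechet_derivative Y (at x) (Z x))"

inductive_set lie_gen :: "('a::euclidean_space \<Rightarrow> 'a) set \<Rightarrow> ('a \<Rightarrow> 'a) set"
  for S where
  base: "Y \<in> S \<Longrightarrow> Y \<in> lie_gen S"
| zero: "(\<lambda>x. 0) \<in> lie_gen S"
| add: "Y \<in> lie_gen S \<Longrightarrow> Z \<in> lie_gen S \<Longrightarrow> (\<lambda>x. Y x + Z x) \<in> lie_gen S"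
| scale: "Y \<in> lie_gen S \<Longrightarrow> (\<lambda>x. c *\<^sub>R Y x) \<in> lie_gen S"
| bracket: "Y \<in> lie_gen S \<Longrightarrow> Z \<in> lie_gen S \<Longrightarrow> lie_bracket Y Z \<in> lie_gen S"

definition VX :: "(real \<Rightarrow> 'a::euclidean_space \<Rightarrow> 'a) \<Rightarrow> ('a \<Rightarrow> 'a) set" where
  "VX X = lie_gen (range X)"

definition fin_dim_fields :: "('a \<Rightarrow> 'b::real_vector) set \<Rightarrow> bool" where
  "fin_dim_fields L \<longleftrightarrow>
     (\<exists>B. finite B \<and> (\<forall>Y\<in>L. \<exists>c. Y = (\<lambda>x. \<Sum>b\<in>B. c b *\<^sub>R b x)))"

definition lie_system :: "(real \<Rightarrow> 'a::euclidean_space \<Rightarrow> 'a) \<Rightarrow> bool" where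
  "lie_system X \<longleftrightarrow> tdep_vector_field X \<and> fin_dim_fields (VX X)"

definition is_solution :: "(real \<Rightarrow> 'a::euclidean_space \<Rightarrow> 'a) \<Rightarrow> real set \<Rightarrow> (real \<Rightarrow> 'a) \<Rightarrow> bool" where
  "is_solution X I x \<longleftrightarrow> open I \<and> is_interval I \<and> I \<noteq> {} \<and>
     (\<forall>t\<in>I. (x has_vector_derivative X t (x t)) (at t))"

text \<open>Local diffeomorphism R^n -> R^n: smooth with invertible differential at every point
 (equivalently, by the inverse function theorem, locally a diffeomorphism).\<close>
definition local_diffeo :: "('a::euclidean_space \<Rightarrow> 'a) \<Rightarrow> bool" where
  "local_diffeo f \<longleftrightarrow> smooth f \<and>
     (\<forall>k. \<exists>f'. (f has_derivative f') (at k) \<and> bij f')"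

text \<open>The product space R^{n_1} x ... x R^{n_m} is real^'N, whose coordinate index
 type 'N is partitioned by blk :: 'N => nat into the blocks 0..m-1 (block a = the
 coordinates of R^{n_(a+1)}). A vector field on the factor of block a is encoded as
 (lifted to) a vector field on real^'N whose components vanish outside block a and
 which depends only on the coordinates in block a.\<close>
definition block_tdep_field :: "('n \<Rightarrow> nat) \<Rightarrow> nat \<Rightarrow> (real \<Rightarrow> real^'n \<Rightarrow> real^'n) \<Rightarrow> bool" where
  "block_tdep_field blk a Y \<longleftrightarrow>
     (\<forall>t x i. blk i \<noteq> a \<longrightarrow> Y t x $ i = 0) \<and>
     (\<forall>t x y. (\<forall>j. blk j = a \<longrightarrow> x $ j = y $ j) \<longrightarrow> Y t x = Y t y)"

definition direct_product :: "nat \<Rightarrow> (nat \<Rightarrow> real \<Rightarrow> real^'n::finite \<Rightarrow> real^'n) \<Rightarrow> real \<Rightarrow> real^'n \<Rightarrow> real^'n" where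
  "direct_product m Xs = (\<lambda>t x. \<Sum>a<m. Xs a t x)"

text \<open>Mixed superposition rule (Phi, X_(1),...,X_(m)) for X, with the factors X_(a)
 block-encoded on real^'N and Phi : (R^{n_1} x ... x R^{n_m}) x R^{n_0} -> R^{n_0}
 written as Phi p k.  There is a generic (open dense) set U of points of the product
 space such that k |-> Phi p k is a local diffeomorphism for p in U, and for every
 family of particular solutions of the X_(a) (i.e. a solution of their direct product)
 staying in U and every k, t |-> Phi (xhat t) k is a particular solution of X.\<close>
definition mixed_superposition_rule ::
  "(real \<Rightarrow> real^'n::finite \<Rightarrow> real^'n) \<Rightarrow> (real^'N::finite \<Rightarrow> real^'n \<Rightarrow> real^'n) \<Rightarrow>
   ('N \<Rightarrow> nat) \<Rightarrow> nat \<Rightarrow> (nat \<Rightarrow> real \<Rightarrow> real^'N \<Rightarrow> real^'N) \<Rightarrow> bool" where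
  "mixed_superposition_rule X Phi blk m Xs \<longleftrightarrow>
     tdep_vector_field X \<and>
     (\<forall>i. blk i < m) \<and>
     (\<forall>a<m. tdep_vector_field (Xs a) \<and> block_tdep_field blk a (Xs a)) \<and>
     smooth (\<lambda>(p, k). Phi p k) \<and>
     (\<exists>U. open U \<and> closure U = UNIV \<and>
        (\<forall>p\<in>U. local_diffeo (Phi p)) \<and>
        (\<forall>I xhat k. is_solution (direct_product m Xs) I xhat \<and> xhat ` I \<subseteq> U \<longrightarrow>
            is_solution X I (\<lambda>t. Phi (xhat t) k)))"

definition related_fields :: "('a::euclidean_space \<Rightarrow> 'b::euclidean_space) \<Rightarrow> ('a \<Rightarrow> 'a) \<Rightarrow> ('b \<Rightarrow> 'b) \<Rightarrow> bool" where
  "related_fields F Z Y \<longleftrightarrow> (\<forall>p. frechet_derivative F (at p) (Z p) = Y (F p))"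

definition projectable :: "('a::euclidean_space \<Rightarrow> 'b::euclidean_space) \<Rightarrow> ('a \<Rightarrow> 'a) \<Rightarrow> bool" where
  "projectable F Z \<longleftrightarrow> (\<exists>Y. vector_field Y \<and> related_fields F Z Y)"

definition lie_epimorphism :: "(('a::euclidean_space \<Rightarrow> 'a) \<Rightarrow> ('b::euclidean_space \<Rightarrow> 'b)) \<Rightarrow>
    ('a \<Rightarrow> 'a) set \<Rightarrow> ('b \<Rightarrow> 'b) set \<Rightarrow> bool" where
  "lie_epimorphism T L1 L2 \<longleftrightarrow>
     (\<forall>Y\<in>L1. \<forall>Z\<in>L1. \<forall>a b. T (\<lambda>x. a *\<^sub>R Y x + b *\<^sub>R Z x) = (\<lambda>x. a *\<^sub>R T Y x + b *\<^sub>R T Z x)) \<and>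
     (\<forall>Y\<in>L1. \<forall>Z\<in>L1. T (lie_bracket Y Z) = lie_bracket (T Y) (T Z)) \<and>
     T ` L1 = L2"

end

theory Submission
  imports Defs
begin

text \<open>
  Write F = Phi_k and Xh for the direct product X_(1) x ... x X_(m).  The argument has
  four independent ingredients, developed in this order:
  (1) a calculus of smooth maps (closure of smoothness under the usual operations,
      symmetry of second derivatives) giving the naturality of the Lie bracket:
      if Z_i is F-related to Y_i then [Z_1,Z_2] is F-related to [Y_1,Y_2];
  (2) local existence of integral curves (Picard iteration as a Banach fixed point);
  (3) from the superposition property, by differentiating along an integral curve of
      Xh started at a generic point and using density of the generic set, every Xh^t is
      F-related to X^t;
  (4) if F has dense image, an F-related field is unique, so the push-forward
      F_* Z is well defined on Lie(Xh^t); by (1) it is a Lie algebra epimorphism onto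
      Lie(X^t).
  Finally, the block structure of the factors makes brackets between different factors
  vanish, so Lie(Xh^t) is contained in the sum of the Lie algebras Lie(X_(a)^t), hence
  finite dimensional: Xh is a Lie system.
\<close>

section \<open>Calculus of smooth maps\<close>

lemma smooth_upto_SucD: "smooth_upto (Suc k) f \<Longrightarrow> smooth_upto k f"
proof (induction k arbitrary: f)
  case (Suc k) then show ?case by simp
qed simp

lemma smooth_upto_const: "smooth_upto k (\<lambda>x. c)"
  by (induction k arbitrary: c) simp_all

text \<open>Each closure property below is proved by induction on the order k: the
  directional derivatives of the combination are the corresponding combinations of
  directional derivatives.\<close>

lemma smooth_upto_add:
  "smooth_upto k f \<Longrightarrow> smooth_upto k g \<Longrightarrow> smooth_upto k (\<lambda>x. f x + g x)"
proof (induction k arbitrary: f g)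
  case (Suc k)
  have df: "\<And>x. f differentiable (at x)" and dg: "\<And>x. g differentiable (at x)" using Suc by auto
  have "frechet_derivative (\<lambda>x. f x + g x) (at x) v =
      frechet_derivative f (at x) v + frechet_derivative g (at x) v" for x v
    using frechet_derivative_at[OF has_derivative_add[OF df[unfolded frechet_derivative_works]
          dg[unfolded frechet_derivative_works]]] by metis
  then show ?case using Suc df dg by (auto intro!: Suc.IH)
qed simp

lemma smooth_upto_scaleR:
  fixes f :: "'a::euclidean_space \<Rightarrow> real" and g :: "'a \<Rightarrow> 'b::euclidean_space"
  shows "smooth_upto k f \<Longrightarrow> smooth_upto k g \<Longrightarrow> smooth_upto k (\<lambda>x. f x *\<^sub>R g x)"
proof (induction k arbitrary: f g)
  case (Suc k)
  have df: "\<And>x. f differentiable (at x)" and dg: "\<And>x. g differentiable (at x)" using Suc by auto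
  have "frechet_derivative (\<lambda>x. f x *\<^sub>R g x) (at x) v =
      f x *\<^sub>R frechet_derivative g (at x) v + frechet_derivative f (at x) v *\<^sub>R g x" for x v
    using frechet_derivative_at[OF has_derivative_scaleR[OF df[unfolded frechet_derivative_works]
          dg[unfolded frechet_derivative_works]]] by metis
  moreover have "smooth_upto k f" "smooth_upto k g" using Suc.prems smooth_upto_SucD by blast+
  ultimately show ?case using Suc df dg
    by (auto intro!: smooth_upto_add Suc.IH differentiable_scaleR)
qed simp

lemma smooth_upto_linear:
  assumes L: "bounded_linear L"
  shows "smooth_upto k f \<Longrightarrow> smooth_upto k (\<lambda>x. L (f x))"
proof (induction k arbitrary: f)
  case (Suc k)
  have df: "\<And>x. (f has_derivative frechet_derivative f (at x)) (at x)"
    using Suc by (simp add: frechet_derivative_works[symmetric])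
  have hd: "((\<lambda>x. L (f x)) has_derivative (\<lambda>v. L (frechet_derivative f (at x) v))) (at x)" for x
    using bounded_linear.has_derivative[OF L df] .
  then have "frechet_derivative (\<lambda>x. L (f x)) (at x) v = L (frechet_derivative f (at x) v)" for x v
    using frechet_derivative_at by metis
  moreover have "(\<lambda>x. L (f x)) differentiable (at x)" for x using hd by (rule differentiableI)
  ultimately show ?case using Suc by auto
qed simp

lemma smooth_upto_affine:
  assumes L: "bounded_linear L"
  shows "smooth_upto k f \<Longrightarrow> smooth_upto k (\<lambda>x. f (c + L x))"
proof (induction k arbitrary: f)
  case (Suc k)
  have df: "\<And>x. (f has_derivative frechet_derivative f (at x)) (at x)"
    using Suc by (simp add: frechet_derivative_works[symmetric])
  have "((\<lambda>x. c + L x) has_derivative L) (at x)" for x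
    using has_derivative_add[OF has_derivative_const[of c] bounded_linear.has_derivative[OF L has_derivative_ident]]
    by simp
  then have hd: "((\<lambda>x. f (c + L x)) has_derivative (\<lambda>v. frechet_derivative f (at (c + L x)) (L v))) (at x)" for x
    using has_derivative_compose[OF _ df] by fastforce
  then have "frechet_derivative (\<lambda>x. f (c + L x)) (at x) v = frechet_derivative f (at (c + L x)) (L v)" for x v
    using frechet_derivative_at by metis
  moreover have "smooth_upto k (\<lambda>x. frechet_derivative f (at (c + L x)) (L v))" for v
    using Suc.IH[of "\<lambda>y. frechet_derivative f (at y) (L v)"] Suc.prems by simp
  moreover have "(\<lambda>x. f (c + L x)) differentiable (at x)" for x using hd by (rule differentiableI)
  ultimately show ?case by simp
qed simp

lemma smooth_upto_sum:
  "finite S \<Longrightarrow> (\<And>i. i \<in> S \<Longrightarrow> smooth_upto k (f i)) \<Longrightarrow> smooth_upto k (\<lambda>x. \<Sum>i\<in>S. f i x)"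
proof (induction S rule: finite_induct)
  case empty then show ?case using smooth_upto_const[of k 0] by simp
next
  case (insert a S) then show ?case by (simp add: smooth_upto_add)
qed

lemma smooth_add: "smooth f \<Longrightarrow> smooth g \<Longrightarrow> smooth (\<lambda>x. f x + g x)"
  by (simp add: smooth_def smooth_upto_add)

lemma smooth_scaleR: "smooth f \<Longrightarrow> smooth g \<Longrightarrow> smooth (\<lambda>x. f x *\<^sub>R g x)"
  by (simp add: smooth_def smooth_upto_scaleR)

lemma smooth_const: "smooth (\<lambda>x. c)"
  by (simp add: smooth_def smooth_upto_const)

lemma smooth_cscale: "smooth g \<Longrightarrow> smooth (\<lambda>x. c *\<^sub>R g x)"
  using smooth_scaleR[OF smooth_const] by blast

lemma smooth_diff: "smooth f \<Longrightarrow> smooth g \<Longrightarrow> smooth (\<lambda>x. f x - g x)"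
  using smooth_add[OF _ smooth_cscale[of g "-1"]] by simp

lemma smooth_linear: "bounded_linear L \<Longrightarrow> smooth f \<Longrightarrow> smooth (\<lambda>x. L (f x))"
  by (simp add: smooth_def smooth_upto_linear)

lemma smooth_affine: "bounded_linear L \<Longrightarrow> smooth f \<Longrightarrow> smooth (\<lambda>x. f (c + L x))"
  by (simp add: smooth_def smooth_upto_affine)

lemma smooth_sum: "finite S \<Longrightarrow> (\<And>i. i \<in> S \<Longrightarrow> smooth (f i)) \<Longrightarrow> smooth (\<lambda>x. \<Sum>i\<in>S. f i x)"
  by (simp add: smooth_def smooth_upto_sum)

lemma smooth_inner: "smooth f \<Longrightarrow> smooth (\<lambda>x. f x \<bullet> c)"
  using smooth_linear[OF bounded_linear_inner_left] by blast

lemma smooth_deriv: "smooth f \<Longrightarrow> smooth (\<lambda>x. frechet_derivative f (at x) v)"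
  unfolding smooth_def by (metis smooth_upto.simps(2))

lemma smooth_has_derivative:
  assumes "smooth f" shows "(f has_derivative frechet_derivative f (at x)) (at x)"
proof -
  have "smooth_upto (Suc 0) f" using assms unfolding smooth_def by blast
  then show ?thesis using frechet_derivative_works by auto
qed

lemma smooth_isCont: "smooth f \<Longrightarrow> isCont f x"
  by (rule has_derivative_continuous[OF smooth_has_derivative])

lemma smooth_continuous: "smooth f \<Longrightarrow> continuous_on UNIV f"
  by (simp add: continuous_at_imp_continuous_on smooth_isCont)

lemma smooth_linear_deriv: "smooth f \<Longrightarrow> linear (frechet_derivative f (at x))"
  using smooth_has_derivative has_derivative_linear by blast

text \<open>Coordinate expansion of a linear map; it turns "apply the differential to a
  varying vector" into a finite sum of smooth products.\<close>

lemma linear_basis_expand: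
  assumes "linear L"
  shows "L v = (\<Sum>i\<in>Basis. (v \<bullet> i) *\<^sub>R L i)"
proof -
  have "L v = L (\<Sum>i\<in>Basis. (v \<bullet> i) *\<^sub>R i)" by (simp add: euclidean_representation)
  also have "\<dots> = (\<Sum>i\<in>Basis. (v \<bullet> i) *\<^sub>R L i)"
    using assms by (simp add: linear_sum linear_scale)
  finally show ?thesis .
qed

lemma smooth_apply_deriv:
  assumes "smooth Y" "smooth Z"
  shows "smooth (\<lambda>x. frechet_derivative Z (at x) (Y x))"
proof -
  have "(\<lambda>x. frechet_derivative Z (at x) (Y x)) =
      (\<lambda>x. \<Sum>i\<in>Basis. (Y x \<bullet> i) *\<^sub>R frechet_derivative Z (at x) i)"
    using linear_basis_expand[OF smooth_linear_deriv[OF assms(2)]] by blast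
  moreover have "smooth (\<lambda>x. \<Sum>i\<in>Basis. (Y x \<bullet> i) *\<^sub>R frechet_derivative Z (at x) i)"
    by (intro smooth_sum smooth_scaleR smooth_inner smooth_deriv assms finite_Basis)
  ultimately show ?thesis by simp
qed

lemma smooth_bracket: "smooth Y \<Longrightarrow> smooth Z \<Longrightarrow> smooth (lie_bracket Y Z)"
  unfolding lie_bracket_def by (intro smooth_diff smooth_apply_deriv)

lemma smooth_lie_gen: "Z \<in> lie_gen S \<Longrightarrow> (\<And>Y. Y \<in> S \<Longrightarrow> smooth Y) \<Longrightarrow> smooth Z"
  by (induction Z rule: lie_gen.induct) (auto intro: smooth_const smooth_add smooth_cscale smooth_bracket)

lemma tdep_smooth:
  assumes "tdep_vector_field X" shows "smooth (X t)"
proof -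
  have "smooth (\<lambda>x. (\<lambda>(t, x). X t x) ((t, 0) + (0::real, x)))"
    using assms unfolding tdep_vector_field_def by (intro smooth_affine bounded_linear_Pair) auto
  then show ?thesis by (simp add: fun_eq_iff)
qed

lemma smooth_freeze_parameter:
  assumes "smooth (\<lambda>(p, k). Phi p k)" shows "smooth (\<lambda>p. Phi p k)"
proof -
  have "smooth (\<lambda>p. (\<lambda>(p, k). Phi p k) ((0, k) + (p, 0)))"
    using assms by (intro smooth_affine bounded_linear_Pair) auto
  then show ?thesis by simp
qed

lemma smooth_VX: "tdep_vector_field X \<Longrightarrow> Z \<in> VX X \<Longrightarrow> smooth Z"
  unfolding VX_def by (erule smooth_lie_gen) (auto intro: tdep_smooth)

section \<open>Symmetry of second derivatives\<close>

definition second_deriv :: "('a::euclidean_space \<Rightarrow> 'b::euclidean_space) \<Rightarrow> 'a \<Rightarrow> 'a \<Rightarrow> 'a \<Rightarrow> 'b" where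
  "second_deriv F q u w = frechet_derivative (\<lambda>q. frechet_derivative F (at q) w) (at q) u"

lemma line_deriv:
  assumes "smooth G"
  shows "DERIV (\<lambda>s. G (a + s *\<^sub>R v) \<bullet> e) s :> (frechet_derivative G (at (a + s *\<^sub>R v)) v \<bullet> e)"
proof -
  have "((\<lambda>s. a + s *\<^sub>R v) has_derivative (\<lambda>d. d *\<^sub>R v)) (at s)"
    by (auto intro!: derivative_eq_intros)
  from has_derivative_compose[OF this smooth_has_derivative[OF assms]]
  have "((\<lambda>s. G (a + s *\<^sub>R v) \<bullet> e) has_derivative
      (\<lambda>d. frechet_derivative G (at (a + s *\<^sub>R v)) (d *\<^sub>R v) \<bullet> e)) (at s)"
    by (rule bounded_linear.has_derivative[OF bounded_linear_inner_left])
  then show ?thesis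
    by (rule has_derivative_imp_has_field_derivative)
      (simp add: linear_scale[OF smooth_linear_deriv[OF assms]])
qed

text \<open>Two applications of the mean value theorem: a component of the second difference
  of F with step h equals h^2 times a component of the second derivative at a point
  close to p.\<close>

lemma second_difference_mvt:
  fixes F :: "'a::euclidean_space \<Rightarrow> 'b::euclidean_space"
  assumes F: "smooth F" and h: "h > 0"
  shows "\<exists>q. norm (q - p) \<le> h * (norm u + norm w) \<and>
    (F (p + h *\<^sub>R u + h *\<^sub>R w) - F (p + h *\<^sub>R u) - F (p + h *\<^sub>R w) + F p) \<bullet> e =
      h * h * (second_deriv F q w u \<bullet> e)"
proof -
  define phi where "phi s = F ((p + h *\<^sub>R w) + s *\<^sub>R u) \<bullet> e - F (p + s *\<^sub>R u) \<bullet> e" for s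
  have "DERIV phi s :> (frechet_derivative F (at ((p + h *\<^sub>R w) + s *\<^sub>R u)) u \<bullet> e -
      frechet_derivative F (at (p + s *\<^sub>R u)) u \<bullet> e)" for s
    unfolding phi_def by (intro DERIV_diff line_deriv F)
  from MVT2[OF h this] obtain xi where xi: "0 < xi" "xi < h" and eq1: "phi h - phi 0 =
      h * (frechet_derivative F (at ((p + h *\<^sub>R w) + xi *\<^sub>R u)) u \<bullet> e -
      frechet_derivative F (at (p + xi *\<^sub>R u)) u \<bullet> e)"
    by auto
  define chi where "chi t = frechet_derivative F (at ((p + xi *\<^sub>R u) + t *\<^sub>R w)) u \<bullet> e" for t
  have "DERIV chi t :> (second_deriv F ((p + xi *\<^sub>R u) + t *\<^sub>R w) w u \<bullet> e)" for t
    unfolding chi_def second_deriv_def by (intro line_deriv smooth_deriv F)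
  from MVT2[OF h this] obtain eta where eta: "0 < eta" "eta < h"
    and eq2: "chi h - chi 0 = h * (second_deriv F ((p + xi *\<^sub>R u) + eta *\<^sub>R w) w u \<bullet> e)"
    by auto
  define q where "q = (p + xi *\<^sub>R u) + eta *\<^sub>R w"
  have "norm (q - p) \<le> norm (xi *\<^sub>R u) + norm (eta *\<^sub>R w)"
    unfolding q_def by (metis add_diff_cancel_left' add.assoc norm_triangle_ineq)
  also have "\<dots> \<le> h * norm u + h * norm w"
    using xi eta by (intro add_mono) (auto intro: mult_right_mono)
  finally have nq: "norm (q - p) \<le> h * (norm u + norm w)" by (simp add: algebra_simps)
  have "(F (p + h *\<^sub>R u + h *\<^sub>R w) - F (p + h *\<^sub>R u) - F (p + h *\<^sub>R w) + F p) \<bullet> e =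
      phi h - phi 0"
    unfolding phi_def by (simp add: algebra_simps inner_diff_left inner_add_left)
  also have "\<dots> = h * (chi h - chi 0)"
    unfolding eq1 chi_def by (simp add: algebra_simps)
  also have "\<dots> = h * h * (second_deriv F q w u \<bullet> e)"
    unfolding eq2 q_def by simp
  finally show ?thesis using nq by blast
qed

lemma isCont_eq_from_near_pairs:
  fixes f g :: "'a::metric_space \<Rightarrow> 'b::metric_space"
  assumes cf: "isCont f p" and cg: "isCont g p"
    and near: "\<And>d. d > 0 \<Longrightarrow> \<exists>q q'. dist q p < d \<and> dist q' p < d \<and> f q = g q'"
  shows "f p = g p"
proof (rule ccontr)
  assume "f p \<noteq> g p"
  define eps where "eps = dist (f p) (g p) / 2"
  have eps: "eps > 0" using \<open>f p \<noteq> g p\<close> unfolding eps_def by simp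
  obtain d1 where d1: "d1 > 0" "\<And>q. dist q p < d1 \<Longrightarrow> dist (f q) (f p) < eps"
    using cf eps unfolding continuous_at_eps_delta by blast
  obtain d2 where d2: "d2 > 0" "\<And>q. dist q p < d2 \<Longrightarrow> dist (g q) (g p) < eps"
    using cg eps unfolding continuous_at_eps_delta by blast
  obtain q q' where qd: "dist q p < min d1 d2" "dist q' p < min d1 d2" and fg: "f q = g q'"
    using near[of "min d1 d2"] d1(1) d2(1) by auto
  from qd have "dist (f q) (f p) < eps" "dist (g q') (g p) < eps" using d1 d2 by auto
  moreover have "dist (f p) (g p) \<le> dist (f q) (f p) + dist (g q') (g p)"
    using dist_triangle3[of "f p" "g p" "f q"] fg by simp
  ultimately show False unfolding eps_def by simp
qed

lemma second_deriv_sym: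
  fixes F :: "'a::euclidean_space \<Rightarrow> 'b::euclidean_space"
  assumes F: "smooth F"
  shows "second_deriv F p u w = second_deriv F p w u"
proof (rule euclidean_eqI)
  fix e :: 'b
  show "second_deriv F p u w \<bullet> e = second_deriv F p w u \<bullet> e"
  proof (rule isCont_eq_from_near_pairs[where f = "\<lambda>q. second_deriv F q u w \<bullet> e"
        and g = "\<lambda>q. second_deriv F q w u \<bullet> e"])
    show "isCont (\<lambda>q. second_deriv F q u w \<bullet> e) p" "isCont (\<lambda>q. second_deriv F q w u \<bullet> e) p"
      unfolding second_deriv_def by (intro continuous_intros smooth_isCont smooth_deriv F)+
    fix d :: real assume d: "d > 0"
    define c where "c = norm u + norm w + 1"
    have c: "c > 0" unfolding c_def by (simp add: add_nonneg_pos)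
    define h where "h = d / (2 * c)"
    have hpos: "h > 0" unfolding h_def using d c by simp
    have "h * c = d / 2" unfolding h_def using c by (simp add: field_simps)
    then have hb: "h * (norm u + norm w) < d"
      using hpos d unfolding c_def by (simp add: algebra_simps)
    obtain q1 where q1: "norm (q1 - p) \<le> h * (norm w + norm u)"
      "(F (p + h *\<^sub>R w + h *\<^sub>R u) - F (p + h *\<^sub>R w) - F (p + h *\<^sub>R u) + F p) \<bullet> e =
        h * h * (second_deriv F q1 u w \<bullet> e)"
      using second_difference_mvt[OF F hpos, of p w u e] by blast
    obtain q2 where q2: "norm (q2 - p) \<le> h * (norm u + norm w)"
      "(F (p + h *\<^sub>R u + h *\<^sub>R w) - F (p + h *\<^sub>R u) - F (p + h *\<^sub>R w) + F p) \<bullet> e =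
        h * h * (second_deriv F q2 w u \<bullet> e)"
      using second_difference_mvt[OF F hpos, of p u w e] by blast
    have "h * h * (second_deriv F q1 u w \<bullet> e) = h * h * (second_deriv F q2 w u \<bullet> e)"
      using q1(2) q2(2) by (simp add: algebra_simps)
    then have "second_deriv F q1 u w \<bullet> e = second_deriv F q2 w u \<bullet> e" using hpos by simp
    moreover have "dist q1 p < d" "dist q2 p < d"
      using q1(1) q2(1) hb by (auto simp: dist_norm add.commute)
    ultimately show "\<exists>q1 q2. dist q1 p < d \<and> dist q2 p < d \<and>
        second_deriv F q1 u w \<bullet> e = second_deriv F q2 w u \<bullet> e" by blast
  qed
qed

section \<open>F-related vector fields and naturality of the Lie bracket\<close>

lemma has_derivative_apply_deriv:
  fixes F :: "'a::euclidean_space \<Rightarrow> 'b::euclidean_space"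
  assumes F: "smooth F" and Z: "smooth Z"
  shows "((\<lambda>q. frechet_derivative F (at q) (Z q)) has_derivative
     (\<lambda>d. \<Sum>i\<in>Basis. (Z p \<bullet> i) *\<^sub>R second_deriv F p d i +
        (frechet_derivative Z (at p) d \<bullet> i) *\<^sub>R frechet_derivative F (at p) i)) (at p)"
proof -
  have "(\<lambda>q. frechet_derivative F (at q) (Z q)) =
      (\<lambda>q. \<Sum>i\<in>Basis. (Z q \<bullet> i) *\<^sub>R frechet_derivative F (at q) i)"
    using linear_basis_expand[OF smooth_linear_deriv[OF F]] by blast
  moreover have "((\<lambda>q. \<Sum>i\<in>Basis. (Z q \<bullet> i) *\<^sub>R frechet_derivative F (at q) i) has_derivative
     (\<lambda>d. \<Sum>i\<in>Basis. (Z p \<bullet> i) *\<^sub>R second_deriv F p d i +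
        (frechet_derivative Z (at p) d \<bullet> i) *\<^sub>R frechet_derivative F (at p) i)) (at p)"
    unfolding second_deriv_def
    by (intro has_derivative_sum has_derivative_scaleR smooth_has_derivative smooth_deriv F
        bounded_linear.has_derivative[OF bounded_linear_inner_left smooth_has_derivative[OF Z]])
  ultimately show ?thesis by simp
qed

lemma second_deriv_linear:
  fixes F :: "'a::euclidean_space \<Rightarrow> 'b::euclidean_space"
  assumes F: "smooth F"
  shows "second_deriv F p d w = (\<Sum>i\<in>Basis. (w \<bullet> i) *\<^sub>R second_deriv F p d i)"
proof -
  have "((\<lambda>q. frechet_derivative F (at q) w) has_derivative
      (\<lambda>d. \<Sum>i\<in>Basis. (w \<bullet> i) *\<^sub>R second_deriv F p d i)) (at p)"
    using has_derivative_apply_deriv[OF F smooth_const, of w p] by simp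
  then have "frechet_derivative (\<lambda>q. frechet_derivative F (at q) w) (at p) =
      (\<lambda>d. \<Sum>i\<in>Basis. (w \<bullet> i) *\<^sub>R second_deriv F p d i)"
    by (rule frechet_derivative_at[symmetric])
  then show ?thesis unfolding second_deriv_def by (rule fun_cong)
qed

text \<open>Differentiating the relation DF(q) Z(q) = Y(F q) in direction d.\<close>

lemma related_deriv_identity:
  fixes F :: "'a::euclidean_space \<Rightarrow> 'b::euclidean_space"
  assumes F: "smooth F" and Z: "smooth Z" and Y: "smooth Y" and rel: "related_fields F Z Y"
  shows "frechet_derivative F (at p) (frechet_derivative Z (at p) d) + second_deriv F p d (Z p)
       = frechet_derivative Y (at (F p)) (frechet_derivative F (at p) d)"
proof -
  have coord: "(\<Sum>i\<in>Basis. (Z p \<bullet> i) *\<^sub>R second_deriv F p d i +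
        (frechet_derivative Z (at p) d \<bullet> i) *\<^sub>R frechet_derivative F (at p) i) =
      frechet_derivative F (at p) (frechet_derivative Z (at p) d) + second_deriv F p d (Z p)" for d
    using second_deriv_linear[OF F, of p d "Z p"]
      linear_basis_expand[OF smooth_linear_deriv[OF F], of p "frechet_derivative Z (at p) d"]
    by (simp add: sum.distrib)
  have "((\<lambda>q. frechet_derivative F (at q) (Z q)) has_derivative
     (\<lambda>d. frechet_derivative F (at p) (frechet_derivative Z (at p) d) + second_deriv F p d (Z p))) (at p)"
    using has_derivative_apply_deriv[OF F Z, of p] unfolding coord .
  moreover have "((\<lambda>q. frechet_derivative F (at q) (Z q)) has_derivative
      (\<lambda>d. frechet_derivative Y (at (F p)) (frechet_derivative F (at p) d))) (at p)"
    using has_derivative_compose[OF smooth_has_derivative[OF F] smooth_has_derivative[OF Y]] rel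
    unfolding related_fields_def by simp
  ultimately show ?thesis by (rule fun_cong[OF has_derivative_unique])
qed

text \<open>Naturality of the Lie bracket: the second-derivative terms cancel by symmetry.\<close>

lemma related_bracket:
  fixes F :: "'a::euclidean_space \<Rightarrow> 'b::euclidean_space"
  assumes F: "smooth F"
    and Z1: "smooth Z1" and Y1: "smooth Y1" and r1: "related_fields F Z1 Y1"
    and Z2: "smooth Z2" and Y2: "smooth Y2" and r2: "related_fields F Z2 Y2"
  shows "related_fields F (lie_bracket Z1 Z2) (lie_bracket Y1 Y2)"
  unfolding related_fields_def
proof
  fix p
  have k1: "frechet_derivative F (at p) (frechet_derivative Z2 (at p) (Z1 p)) + second_deriv F p (Z1 p) (Z2 p)
       = frechet_derivative Y2 (at (F p)) (Y1 (F p))"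
    using related_deriv_identity[OF F Z2 Y2 r2, of p "Z1 p"] r1 unfolding related_fields_def by simp
  have k2: "frechet_derivative F (at p) (frechet_derivative Z1 (at p) (Z2 p)) + second_deriv F p (Z2 p) (Z1 p)
       = frechet_derivative Y1 (at (F p)) (Y2 (F p))"
    using related_deriv_identity[OF F Z1 Y1 r1, of p "Z2 p"] r2 unfolding related_fields_def by simp
  have "frechet_derivative F (at p) (lie_bracket Z1 Z2 p) =
      frechet_derivative F (at p) (frechet_derivative Z2 (at p) (Z1 p)) -
      frechet_derivative F (at p) (frechet_derivative Z1 (at p) (Z2 p))"
    unfolding lie_bracket_def by (rule linear_diff[OF smooth_linear_deriv[OF F]])
  also have "\<dots> = lie_bracket Y1 Y2 (F p)"
    unfolding lie_bracket_def k1[symmetric] k2[symmetric] second_deriv_sym[OF F, of p "Z1 p"] by simp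
  finally show "frechet_derivative F (at p) (lie_bracket Z1 Z2 p) = lie_bracket Y1 Y2 (F p)" .
qed

lemma related_lin:
  fixes F :: "'a::euclidean_space \<Rightarrow> 'b::euclidean_space"
  assumes F: "smooth F" and r1: "related_fields F Z1 Y1" and r2: "related_fields F Z2 Y2"
  shows "related_fields F (\<lambda>x. a *\<^sub>R Z1 x + b *\<^sub>R Z2 x) (\<lambda>x. a *\<^sub>R Y1 x + b *\<^sub>R Y2 x)"
  using r1 r2 linear_add[OF smooth_linear_deriv[OF F]] linear_scale[OF smooth_linear_deriv[OF F]]
  unfolding related_fields_def by simp

lemma related_zero:
  fixes F :: "'a::euclidean_space \<Rightarrow> 'b::euclidean_space"
  assumes F: "smooth F"
  shows "related_fields F (\<lambda>x. 0) (\<lambda>x. 0)"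
  unfolding related_fields_def using linear_0[OF smooth_linear_deriv[OF F]] by simp

lemma continuous_eq_on_closure:
  fixes f g :: "'a::topological_space \<Rightarrow> 'b::t2_space"
  assumes "continuous_on UNIV f" "continuous_on UNIV g" "\<And>x. x \<in> S \<Longrightarrow> f x = g x"
    and "x \<in> closure S"
  shows "f x = g x"
proof -
  have "closure S \<subseteq> {x. f x = g x}"
    by (intro closure_minimal closed_Collect_eq assms(1,2)) (use assms(3) in auto)
  then show ?thesis using assms(4) by auto
qed

lemma related_unique:
  fixes F :: "'a::euclidean_space \<Rightarrow> 'b::euclidean_space"
  assumes dense: "closure (range F) = UNIV" and Y1: "smooth Y1" and Y2: "smooth Y2"
    and r1: "related_fields F Z Y1" and r2: "related_fields F Z Y2"
  shows "Y1 = Y2"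
proof
  fix y
  show "Y1 y = Y2 y"
  proof (rule continuous_eq_on_closure[where f = Y1 and g = Y2 and S = "range F"])
    show "continuous_on UNIV Y1" "continuous_on UNIV Y2" using Y1 Y2 by (simp_all add: smooth_continuous)
    show "Y1 q = Y2 q" if "q \<in> range F" for q
      using that r1 r2 unfolding related_fields_def by (metis rangeE)
    show "y \<in> closure (range F)" using dense by simp
  qed
qed

section \<open>Local existence of integral curves\<close>

text \<open>To work on the
  complete space of bounded continuous functions on the whole real line, curves are
  retracted onto the ball (proj) and times onto the interval (clamp); for h small the
  Picard operator is a contraction with constant 1/2.\<close>

locale picard_setting =
  fixes G :: "real \<Rightarrow> 'a::euclidean_space \<Rightarrow> 'a" and t0 :: real and p :: 'a and r M L h :: real
  assumes cont: "continuous_on UNIV (\<lambda>(t, x). G t x)"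
    and r: "r > 0" and M: "M \<ge> 0" and L: "L \<ge> 0"
    and h: "h > 0" "h \<le> 1" "h * M \<le> r" "h * L \<le> 1 / 2"
    and bnd: "\<And>s y. s \<in> {t0..t0+1} \<Longrightarrow> y \<in> cball p r \<Longrightarrow> norm (G s y) \<le> M"
    and lip: "\<And>s y z. s \<in> {t0..t0+1} \<Longrightarrow> y \<in> cball p r \<Longrightarrow> z \<in> cball p r \<Longrightarrow>
        norm (G s y - G s z) \<le> L * norm (y - z)"
begin

definition clamp :: "real \<Rightarrow> real" where "clamp t = max t0 (min (t0 + h) t)"

definition proj :: "'a \<Rightarrow> 'a" where "proj = closest_point (cball p r)"

definition along :: "(real \<Rightarrow> 'a) \<Rightarrow> real \<Rightarrow> 'a" where "along g s = G s (proj (g s))"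

definition picard_op :: "(real \<Rightarrow> 'a) \<Rightarrow> real \<Rightarrow> 'a" where
  "picard_op g t = p + integral {t0..clamp t} (along g)"

lemma clamp_in: "clamp t \<in> {t0..t0+h}"
  unfolding clamp_def using h by auto

lemma clamp_id: "t \<in> {t0..t0+h} \<Longrightarrow> clamp t = t"
  unfolding clamp_def by auto

lemma proj_in: "proj y \<in> cball p r"
  unfolding proj_def using r by (intro closest_point_in_set) auto

lemma along_cont:
  assumes "continuous_on UNIV g" shows "continuous_on S (along g)"
proof -
  have "continuous_on UNIV proj"
    unfolding proj_def using r by (intro continuous_on_closest_point) auto
  then have "continuous_on UNIV (\<lambda>s. (s, proj (g s)))"
    by (intro continuous_intros continuous_on_compose2[OF _ assms]) auto
  from continuous_on_compose2[OF cont this] have "continuous_on UNIV (along g)"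
    unfolding along_def by simp
  then show ?thesis by (rule continuous_on_subset) simp
qed

lemma along_bound: "s \<in> {t0..t0+h} \<Longrightarrow> norm (along g s) \<le> M"
  unfolding along_def using h by (intro bnd proj_in) auto

lemma picard_op_dist: "continuous_on UNIV g \<Longrightarrow> norm (picard_op g t - p) \<le> M * h"
proof -
  assume g: "continuous_on UNIV g"
  have "norm (integral {t0..clamp t} (along g)) \<le> M * (clamp t - t0)"
    using clamp_in[of t] by (intro integral_bound along_cont g along_bound) auto
  also have "\<dots> \<le> M * h" using clamp_in[of t] M by (intro mult_left_mono) auto
  finally show ?thesis unfolding picard_op_def by simp
qed

lemma picard_op_bcontfun:
  assumes g: "continuous_on UNIV g" shows "picard_op g \<in> bcontfun"
proof (rule bcontfun_normI)
  have "continuous_on {t0..t0+h} (\<lambda>u. integral {t0..u} (along g))"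
    by (intro indefinite_integral_continuous_1 integrable_continuous_interval along_cont g)
  then have "continuous_on UNIV (\<lambda>t. integral {t0..clamp t} (along g))"
    by (rule continuous_on_compose2) (use clamp_in in \<open>auto simp: clamp_def intro!: continuous_intros\<close>)
  then show "continuous_on UNIV (picard_op g)"
    unfolding picard_op_def by (intro continuous_intros)
  show "norm (picard_op g t) \<le> norm p + M * h" for t
    using norm_triangle_ineq[of p "picard_op g t - p"] picard_op_dist[OF g, of t] by simp
qed

definition picard_map :: "(real \<Rightarrow>\<^sub>C 'a) \<Rightarrow> (real \<Rightarrow>\<^sub>C 'a)" where
  "picard_map g = Bcontfun (picard_op (apply_bcontfun g))"

lemma apply_picard_map: "apply_bcontfun (picard_map g) = picard_op (apply_bcontfun g)"
  unfolding picard_map_def by (rule Bcontfun_inverse[OF picard_op_bcontfun]) simp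

lemma picard_map_contraction: "dist (picard_map g1) (picard_map g2) \<le> (1/2) * dist g1 g2"
proof (rule dist_bound)
  fix t
  let ?f1 = "along (apply_bcontfun g1)" and ?f2 = "along (apply_bcontfun g2)"
  have "dist (picard_map g1 t) (picard_map g2 t) =
      norm (integral {t0..clamp t} (\<lambda>s. ?f1 s - ?f2 s))"
    unfolding apply_picard_map picard_op_def dist_norm
    by (simp add: integral_diff integrable_continuous_interval along_cont)
  also have "\<dots> \<le> (L * dist g1 g2) * (clamp t - t0)"
  proof (rule integral_bound)
    show "t0 \<le> clamp t" using clamp_in[of t] by simp
    show "continuous_on {t0..clamp t} (\<lambda>s. ?f1 s - ?f2 s)"
      by (intro continuous_intros along_cont) simp_all
    fix s assume "s \<in> {t0..clamp t}"
    then have s: "s \<in> {t0..t0+1}" using clamp_in[of t] h by auto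
    have "norm (?f1 s - ?f2 s) \<le> L * dist (proj (g1 s)) (proj (g2 s))"
      unfolding along_def dist_norm by (intro lip s proj_in)
    also have "\<dots> \<le> L * dist g1 g2"
      using closest_point_lipschitz[of "cball p r" "g1 s" "g2 s"] dist_bounded[of g1 s g2] r L
      unfolding proj_def by (intro mult_left_mono) auto
    finally show "norm (?f1 s - ?f2 s) \<le> L * dist g1 g2" .
  qed
  also have "\<dots> \<le> (L * dist g1 g2) * h"
    using clamp_in[of t] L by (intro mult_left_mono) auto
  also have "\<dots> \<le> (1/2) * dist g1 g2"
    using mult_right_mono[OF h(4) zero_le_dist[of g1 g2]] by (simp add: algebra_simps)
  finally show "dist (picard_map g1 t) (picard_map g2 t) \<le> (1/2) * dist g1 g2" .
qed

lemma picard_solution: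
  "\<exists>x. continuous_on UNIV x \<and> x t0 = p \<and> (\<forall>t\<in>{t0..t0+h}. x t \<in> cball p r) \<and>
     (\<forall>t\<in>{t0<..<t0+h}. (x has_vector_derivative G t (x t)) (at t))"
proof -
  obtain g where "picard_map g = g"
    using banach_fix_type[of "1/2" picard_map] picard_map_contraction by auto
  define x where "x = apply_bcontfun g"
  have fixed: "x t = picard_op x t" for t
    using apply_picard_map[of g] \<open>picard_map g = g\<close> unfolding x_def by simp
  have xc: "continuous_on UNIV x" unfolding x_def by simp
  have x0: "x t0 = p" using fixed[of t0] clamp_id[of t0] h by (simp add: picard_op_def)
  have xball: "x t \<in> cball p r" if "t \<in> {t0..t0+h}" for t
    using picard_op_dist[OF xc, of t] h(3) fixed[of t]
    by (simp add: dist_norm norm_minus_commute mult.commute)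
  have "(x has_vector_derivative G t (x t)) (at t)" if t: "t \<in> {t0<..<t0+h}" for t
  proof -
    have tin: "t \<in> {t0..t0+h}" using t by auto
    have "((\<lambda>u. integral {t0..u} (along x)) has_vector_derivative along x t) (at t within {t0..t0+h})"
      by (intro integral_has_vector_derivative along_cont xc tin)
    then have "((\<lambda>u. p + integral {t0..u} (along x)) has_vector_derivative along x t)
        (at t within {t0..t0+h})"
      by (intro derivative_eq_intros) auto
    then have "(x has_vector_derivative along x t) (at t within {t0..t0+h})"
      by (rule has_vector_derivative_transform[OF tin, rotated])
        (use fixed clamp_id in \<open>auto simp: picard_op_def\<close>)
    moreover have "at t within {t0..t0+h} = at t"
      using t by (intro at_within_interior) simp
    moreover have "along x t = G t (x t)"
      unfolding along_def proj_def using xball[OF tin] by (simp add: closest_point_self)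
    ultimately show ?thesis by simp
  qed
  then show ?thesis using xc x0 xball by blast
qed

end

text \<open>A smooth time-dependent field is bounded and uniformly Lipschitz in space on
  [t0, t0+1] x cball p r: the Lipschitz constant bounds the spatial differential there.\<close>

lemma linear_norm_basis_bound:
  fixes D :: "'a::euclidean_space \<Rightarrow> 'b::real_normed_vector"
  assumes "linear D"
  shows "norm (D v) \<le> (\<Sum>i\<in>Basis. norm (D i)) * norm v"
proof -
  have "norm (D v) \<le> (\<Sum>i\<in>Basis. norm ((v \<bullet> i) *\<^sub>R D i))"
    using linear_basis_expand[OF assms, of v] norm_sum by metis
  also have "\<dots> \<le> (\<Sum>i\<in>Basis. norm v * norm (D i))"
    by (intro sum_mono) (simp add: Basis_le_norm mult_right_mono)
  finally show ?thesis by (simp add: sum_distrib_left mult.commute)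
qed

lemma spatial_derivative:
  fixes G :: "real \<Rightarrow> 'a::euclidean_space \<Rightarrow> 'a"
  assumes "smooth (\<lambda>(t, x). G t x)"
  shows "(G s has_derivative (\<lambda>v. frechet_derivative (\<lambda>(t, x). G t x) (at (s, y)) (0, v))) (at y)"
proof -
  have "((\<lambda>y. (s, y)) has_derivative (\<lambda>v. (0, v))) (at y)"
    by (auto intro!: derivative_eq_intros)
  from has_derivative_compose[OF this smooth_has_derivative[OF assms]] show ?thesis by simp
qed

lemma tdep_local_bounds:
  fixes G :: "real \<Rightarrow> 'a::euclidean_space \<Rightarrow> 'a"
  assumes "tdep_vector_field G" and r: "r \<ge> 0"
  shows "\<exists>M L. M \<ge> 0 \<and> L \<ge> 0 \<and>
    (\<forall>s\<in>{t0..t0+1}. \<forall>y\<in>cball p r. norm (G s y) \<le> M) \<and>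
    (\<forall>s\<in>{t0..t0+1}. \<forall>y\<in>cball p r. \<forall>z\<in>cball p r. norm (G s y - G s z) \<le> L * norm (y - z))"
proof -
  define H where "H = (\<lambda>(t, x). G t x)"
  have H: "smooth H" using assms(1) unfolding tdep_vector_field_def H_def .
  define K where "K = {t0..t0+1} \<times> cball p r"
  have K: "compact K" unfolding K_def by (intro compact_Times compact_cball compact_Icc)
  define lip where "lip z = (\<Sum>i\<in>Basis. norm (frechet_derivative H (at z) (0, i)))" for z
  have cont: "continuous_on K H" "continuous_on K lip"
    unfolding lip_def by (intro continuous_intros continuous_on_subset[OF smooth_continuous] smooth_deriv H subset_UNIV)+
  have "bounded (H ` K)" "bounded (lip ` K)"
    by (intro compact_imp_bounded compact_continuous_image K cont)+
  then obtain M L where M: "\<And>z. z \<in> K \<Longrightarrow> norm (H z) \<le> M" and L: "\<And>z. z \<in> K \<Longrightarrow> norm (lip z) \<le> L"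
    unfolding bounded_iff by blast
  have "norm (G s y - G s z) \<le> L * norm (y - z)"
    if s: "s \<in> {t0..t0+1}" and yz: "y \<in> cball p r" "z \<in> cball p r" for s y z
  proof (rule differentiable_bound[OF convex_cball _ _ yz])
    fix w assume w: "w \<in> cball p r"
    show "(G s has_derivative (\<lambda>v. frechet_derivative H (at (s, w)) (0, v))) (at w within cball p r)"
      using spatial_derivative[OF H[unfolded H_def]] unfolding H_def by (rule has_derivative_at_withinI)
    have "linear (\<lambda>v::'a. (0::real, v))" by (simp add: linearI)
    from linear_compose[OF this smooth_linear_deriv[OF H]]
    have lin: "linear (\<lambda>v. frechet_derivative H (at (s, w)) (0, v))" by (simp add: o_def)
    have "lip (s, w) \<le> L" using L[of "(s, w)"] s w unfolding K_def by auto
    then have "norm (frechet_derivative H (at (s, w)) (0, v)) \<le> L * norm v" for v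
      using linear_norm_basis_bound[OF lin, of v] unfolding lip_def
      by (smt (verit) mult_right_mono norm_ge_zero)
    then show "onorm (\<lambda>v. frechet_derivative H (at (s, w)) (0, v)) \<le> L" by (rule onorm_le)
  qed
  moreover have "norm (G s y) \<le> M" if "s \<in> {t0..t0+1}" "y \<in> cball p r" for s y
    using M[of "(s, y)"] that unfolding K_def H_def by simp
  moreover have "(t0, p) \<in> K" unfolding K_def using r by simp
  then have "M \<ge> 0" "L \<ge> 0" using M L norm_ge_zero order_trans by blast+
  ultimately show ?thesis by blast
qed

lemma local_integral_curve:
  fixes G :: "real \<Rightarrow> 'a::euclidean_space \<Rightarrow> 'a"
  assumes G: "tdep_vector_field G" and U: "open U" "p \<in> U"
  shows "\<exists>h>0. \<exists>x. continuous_on UNIV x \<and> x t0 = p \<and> x ` {t0<..<t0+h} \<subseteq> U \<and>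
           is_solution G {t0<..<t0+h} x"
proof -
  obtain r where r: "r > 0" and rU: "cball p r \<subseteq> U" using U open_contains_cball by blast
  obtain M L where nonneg: "M \<ge> 0" "L \<ge> 0"
    and bnd: "\<forall>s\<in>{t0..t0+1}. \<forall>y\<in>cball p r. norm (G s y) \<le> M"
    and lip: "\<forall>s\<in>{t0..t0+1}. \<forall>y\<in>cball p r. \<forall>z\<in>cball p r. norm (G s y - G s z) \<le> L * norm (y - z)"
    using tdep_local_bounds[OF G, of r t0 p] r by auto
  define h where "h = min 1 (min (r / (M + 1)) (1 / (2 * (L + 1))))"
  have "h > 0" "h \<le> 1" unfolding h_def using r nonneg by auto
  moreover have "h * M \<le> r"
  proof -
    have "h * M \<le> r / (M + 1) * M" unfolding h_def using nonneg by (intro mult_right_mono) auto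
    also have "\<dots> \<le> r" using r nonneg by (simp add: field_simps)
    finally show ?thesis .
  qed
  moreover have "h * L \<le> 1 / 2"
  proof -
    have "h * L \<le> 1 / (2 * (L + 1)) * L" unfolding h_def using nonneg by (intro mult_right_mono) auto
    also have "\<dots> \<le> 1 / 2" using nonneg by (simp add: field_simps)
    finally show ?thesis .
  qed
  moreover have "continuous_on UNIV (\<lambda>(t, x). G t x)"
    using G smooth_continuous unfolding tdep_vector_field_def by blast
  ultimately interpret picard_setting G t0 p r M L h
    by unfold_locales (use r nonneg bnd lip in auto)
  obtain x where "continuous_on UNIV x" "x t0 = p" "\<forall>t\<in>{t0..t0+h}. x t \<in> cball p r"
    "\<forall>t\<in>{t0<..<t0+h}. (x has_vector_derivative G t (x t)) (at t)"
    using picard_solution by blast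
  moreover have "x ` {t0<..<t0+h} \<subseteq> U" using calculation(3) rU by auto
  ultimately show ?thesis using h(1) unfolding is_solution_def
    by (auto simp: is_interval_def intro!: exI[of _ h] exI[of _ x])
qed

section \<open>Superposition rules force relatedness\<close>

lemma continuous_on_apply_deriv:
  fixes F :: "'a::euclidean_space \<Rightarrow> 'b::euclidean_space"
  assumes F: "smooth F" and x: "continuous_on S x" and v: "continuous_on S v"
  shows "continuous_on S (\<lambda>t. frechet_derivative F (at (x t)) (v t))"
proof -
  have eq: "(\<lambda>t. frechet_derivative F (at (x t)) (v t)) =
      (\<lambda>t. \<Sum>i\<in>Basis. (v t \<bullet> i) *\<^sub>R frechet_derivative F (at (x t)) i)"
    using linear_basis_expand[OF smooth_linear_deriv[OF F]] by blast
  show ?thesis unfolding eq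
    by (intro continuous_intros v continuous_on_compose2[OF smooth_continuous[OF smooth_deriv[OF F]] x]) simp
qed

lemma has_vector_derivative_image_curve:
  assumes F: "smooth F" and dx: "(x has_vector_derivative Xh t (x t)) (at t)"
  shows "((\<lambda>t. F (x t)) has_vector_derivative frechet_derivative F (at (x t)) (Xh t (x t))) (at t)"
proof -
  have "((\<lambda>t. F (x t)) has_derivative (\<lambda>d. frechet_derivative F (at (x t)) (d *\<^sub>R Xh t (x t)))) (at t)"
    using has_derivative_compose[OF dx[unfolded has_vector_derivative_def] smooth_has_derivative[OF F]] by simp
  then show ?thesis
    unfolding has_vector_derivative_def by (simp add: linear_scale[OF smooth_linear_deriv[OF F]])
qed

text \<open>If F maps the integral curves of Xh inside U to integral curves of X, then at every
  point p of U the field Xh^t0 is mapped by DF to X^t0: compare the velocities of the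
  image of the integral curve of Xh through p, then let the time tend to t0.\<close>

lemma related_at_generic_point:
  fixes Xh :: "real \<Rightarrow> 'a::euclidean_space \<Rightarrow> 'a" and X :: "real \<Rightarrow> 'b::euclidean_space \<Rightarrow> 'b"
  assumes Xh: "tdep_vector_field Xh" and X: "tdep_vector_field X" and F: "smooth F"
    and U: "open U" "p \<in> U"
    and sol: "\<And>I x. is_solution Xh I x \<Longrightarrow> x ` I \<subseteq> U \<Longrightarrow> is_solution X I (\<lambda>t. F (x t))"
  shows "frechet_derivative F (at p) (Xh t0 p) = X t0 (F p)"
proof -
  obtain h x where h: "h > 0" and xc: "continuous_on UNIV x" and x0: "x t0 = p"
    and xU: "x ` {t0<..<t0+h} \<subseteq> U" and xs: "is_solution Xh {t0<..<t0+h} x"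
    using local_integral_curve[OF Xh U] by blast
  have ys: "is_solution X {t0<..<t0+h} (\<lambda>t. F (x t))" by (rule sol[OF xs xU])
  define v1 where "v1 t = frechet_derivative F (at (x t)) (Xh t (x t))" for t
  define v2 where "v2 t = X t (F (x t))" for t
  have cXh: "continuous_on UNIV (\<lambda>t. Xh t (x t))"
    using continuous_on_compose2[OF smooth_continuous continuous_on_Pair[OF continuous_on_id xc]] Xh
    unfolding tdep_vector_field_def by fastforce
  have "continuous_on UNIV (\<lambda>t. F (x t))"
    by (rule continuous_on_compose2[OF smooth_continuous[OF F] xc]) simp
  then have cX: "continuous_on UNIV v2"
    using continuous_on_compose2[OF smooth_continuous continuous_on_Pair[OF continuous_on_id]] X
    unfolding tdep_vector_field_def v2_def by fastforce
  have "continuous_on UNIV v1"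
    unfolding v1_def by (rule continuous_on_apply_deriv[OF F xc cXh])
  moreover note cX
  moreover have "v1 t = v2 t" if t: "t \<in> {t0<..<t0+h}" for t
    unfolding v1_def v2_def
  proof (rule vector_derivative_unique_at)
    show "((\<lambda>t. F (x t)) has_vector_derivative frechet_derivative F (at (x t)) (Xh t (x t))) (at t)"
      using has_vector_derivative_image_curve[OF F] xs t unfolding is_solution_def by blast
    show "((\<lambda>t. F (x t)) has_vector_derivative X t (F (x t))) (at t)"
      using ys t unfolding is_solution_def by blast
  qed
  moreover have "t0 \<in> closure {t0<..<t0+h}" using h by simp
  ultimately have "v1 t0 = v2 t0" by (rule continuous_eq_on_closure)
  then show ?thesis unfolding v1_def v2_def x0 .
qed

text \<open>Since the generic set U is dense, Xh^t is F-related to X^t everywhere.\<close>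

lemma superposition_related:
  fixes Xh :: "real \<Rightarrow> 'a::euclidean_space \<Rightarrow> 'a" and X :: "real \<Rightarrow> 'b::euclidean_space \<Rightarrow> 'b"
  assumes Xh: "tdep_vector_field Xh" and X: "tdep_vector_field X" and F: "smooth F"
    and U: "open U" "closure U = UNIV"
    and sol: "\<And>I x. is_solution Xh I x \<Longrightarrow> x ` I \<subseteq> U \<Longrightarrow> is_solution X I (\<lambda>t. F (x t))"
  shows "related_fields F (Xh t) (X t)"
  unfolding related_fields_def
proof
  fix p
  show "frechet_derivative F (at p) (Xh t p) = X t (F p)"
  proof (rule continuous_eq_on_closure[where f = "\<lambda>p. frechet_derivative F (at p) (Xh t p)"
        and g = "\<lambda>p. X t (F p)" and S = U])
    show "continuous_on UNIV (\<lambda>p. frechet_derivative F (at p) (Xh t p))"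
      by (rule continuous_on_apply_deriv[OF F continuous_on_id smooth_continuous[OF tdep_smooth[OF Xh]]])
    show "continuous_on UNIV (\<lambda>p. X t (F p))"
      by (rule continuous_on_compose2[OF smooth_continuous[OF tdep_smooth[OF X]] smooth_continuous[OF F]]) simp
    show "frechet_derivative F (at q) (Xh t q) = X t (F q)" if "q \<in> U" for q
      using related_at_generic_point[OF Xh X F U(1) that sol] .
    show "p \<in> closure U" using U(2) by simp
  qed
qed

section \<open>The push-forward of Lie algebras of vector fields\<close>

text \<open>The push-forward F_* Z: the smooth field F-related to Z (unique when it exists and
  F has dense image).\<close>

definition push_forward :: "('a::euclidean_space \<Rightarrow> 'b::euclidean_space) \<Rightarrow> ('a \<Rightarrow> 'a) \<Rightarrow> ('b \<Rightarrow> 'b)" where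
  "push_forward F Z = (SOME Y. smooth Y \<and> related_fields F Z Y)"

lemma push_forward_eq:
  assumes "closure (range F) = UNIV" "smooth Y" "related_fields F Z Y"
  shows "push_forward F Z = Y"
proof -
  have "smooth (push_forward F Z) \<and> related_fields F Z (push_forward F Z)"
    unfolding push_forward_def by (rule someI[of _ Y]) (use assms in blast)
  then show ?thesis using related_unique assms by blast
qed

locale related_tdep_fields =
  fixes F :: "'a::euclidean_space \<Rightarrow> 'b::euclidean_space"
    and Xh :: "real \<Rightarrow> 'a \<Rightarrow> 'a" and X :: "real \<Rightarrow> 'b \<Rightarrow> 'b"
  assumes F: "smooth F" and Xh: "tdep_vector_field Xh" and X: "tdep_vector_field X"
    and dense: "closure (range F) = UNIV" and rel: "\<And>t. related_fields F (Xh t) (X t)"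
begin

text \<open>Relatedness propagates from the generators to Lie(Xh^t), by naturality of the
  linear operations and of the bracket.\<close>

lemma related_field_exists: "Z \<in> VX Xh \<Longrightarrow> \<exists>Y\<in>VX X. related_fields F Z Y"
  unfolding VX_def
proof (induction Z rule: lie_gen.induct)
  case (base Z)
  then show ?case using rel by (auto intro: lie_gen.base)
next
  case zero
  then show ?case using related_zero[OF F] by (auto intro: lie_gen.zero)
next
  case (add Z1 Z2)
  then show ?case using related_lin[OF F, of Z1 _ Z2 _ 1 1] by (force intro: lie_gen.add)
next
  case (scale Z c)
  then show ?case using related_lin[OF F, of Z _ Z _ c 0] by (force intro: lie_gen.scale)
next
  case (bracket Z1 Z2)
  then obtain Y1 Y2 where "Y1 \<in> VX X" "related_fields F Z1 Y1" "Y2 \<in> VX X" "related_fields F Z2 Y2"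
    unfolding VX_def by blast
  moreover have "smooth Z1" "smooth Z2" using bracket.hyps smooth_VX[OF Xh] unfolding VX_def by auto
  ultimately show ?case using related_bracket[OF F] smooth_VX[OF X]
    unfolding VX_def by (blast intro: lie_gen.bracket)
qed

lemma push_forward_related:
  assumes "Z \<in> VX Xh"
  shows "push_forward F Z \<in> VX X" "related_fields F Z (push_forward F Z)"
  using related_field_exists[OF assms] push_forward_eq[OF dense smooth_VX[OF X]] by auto

lemma push_forward_generator: "push_forward F (Xh t) = X t"
  by (rule push_forward_eq[OF dense tdep_smooth[OF X] rel])

lemma push_forward_lin:
  assumes "Y \<in> VX Xh" "Z \<in> VX Xh"
  shows "push_forward F (\<lambda>x. a *\<^sub>R Y x + b *\<^sub>R Z x) =
    (\<lambda>x. a *\<^sub>R push_forward F Y x + b *\<^sub>R push_forward F Z x)"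
  using push_forward_related[OF assms(1)] push_forward_related[OF assms(2)]
  by (intro push_forward_eq[OF dense] smooth_add smooth_cscale smooth_VX[OF X] related_lin[OF F])

lemma push_forward_bracket:
  assumes "Y \<in> VX Xh" "Z \<in> VX Xh"
  shows "push_forward F (lie_bracket Y Z) = lie_bracket (push_forward F Y) (push_forward F Z)"
  using push_forward_related[OF assms(1)] push_forward_related[OF assms(2)] assms
  by (intro push_forward_eq[OF dense] smooth_bracket smooth_VX[OF X] related_bracket[OF F] smooth_VX[OF Xh])

text \<open>Every element of Lie(X^t) is a push-forward, since the generators X^t are.\<close>

lemma push_forward_onto: "Y \<in> VX X \<Longrightarrow> Y \<in> push_forward F ` VX Xh"
  unfolding VX_def
proof (induction Y rule: lie_gen.induct)
  case (base Y)
  then obtain t where "Y = push_forward F (Xh t)" using push_forward_generator by auto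
  then show ?case by (blast intro: lie_gen.base)
next
  case zero
  have "push_forward F (\<lambda>x. 0) = (\<lambda>x. 0)" by (rule push_forward_eq[OF dense smooth_const related_zero[OF F]])
  then show ?case unfolding VX_def by (metis image_eqI lie_gen.zero)
next
  case (add Y Z)
  then obtain Y' Z' where "Y' \<in> VX Xh" "Z' \<in> VX Xh" "Y = push_forward F Y'" "Z = push_forward F Z'"
    unfolding VX_def by blast
  moreover have "(\<lambda>x. Y' x + Z' x) \<in> VX Xh" using calculation unfolding VX_def by (intro lie_gen.add)
  moreover have "(\<lambda>x. Y x + Z x) = push_forward F (\<lambda>x. Y' x + Z' x)"
    using calculation push_forward_lin[of Y' Z' 1 1] by simp
  ultimately show ?case unfolding VX_def by (intro rev_image_eqI)
next
  case (scale Y c)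
  then obtain Y' where "Y' \<in> VX Xh" "Y = push_forward F Y'" unfolding VX_def by blast
  moreover have "(\<lambda>x. c *\<^sub>R Y' x) \<in> VX Xh" using calculation unfolding VX_def by (intro lie_gen.scale)
  moreover have "(\<lambda>x. c *\<^sub>R Y x) = push_forward F (\<lambda>x. c *\<^sub>R Y' x)"
    using calculation push_forward_lin[of Y' Y' c 0] by simp
  ultimately show ?case unfolding VX_def by (intro rev_image_eqI)
next
  case (bracket Y Z)
  then obtain Y' Z' where "Y' \<in> VX Xh" "Z' \<in> VX Xh" "Y = push_forward F Y'" "Z = push_forward F Z'"
    unfolding VX_def by blast
  moreover have "lie_bracket Y' Z' \<in> VX Xh" using calculation unfolding VX_def by (intro lie_gen.bracket)
  moreover have "lie_bracket Y Z = push_forward F (lie_bracket Y' Z')"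
    using calculation push_forward_bracket[of Y' Z'] by simp
  ultimately show ?case unfolding VX_def by (intro rev_image_eqI)
qed

theorem push_forward_lie_epimorphism: "lie_epimorphism (push_forward F) (VX Xh) (VX X)"
  unfolding lie_epimorphism_def
  using push_forward_lin push_forward_bracket push_forward_related(1) push_forward_onto by blast

end

section \<open>The direct product of Lie systems is a Lie system\<close>

definition block_proj :: "('N::finite \<Rightarrow> nat) \<Rightarrow> nat \<Rightarrow> real^'N \<Rightarrow> real^'N" where
  "block_proj blk a x = (\<chi> j. if blk j = a then x $ j else 0)"

lemma linear_block_proj: "linear (block_proj blk a)"
  unfolding block_proj_def by (rule linearI) (simp_all add: vec_eq_iff)

lemma block_proj_idem: "block_proj blk a (block_proj blk a x) = block_proj blk a x"
  unfolding block_proj_def by (simp add: vec_eq_iff)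

lemma block_proj_orthogonal: "a \<noteq> b \<Longrightarrow> block_proj blk b (block_proj blk a x) = 0"
  unfolding block_proj_def by (simp add: vec_eq_iff)

definition block_field :: "('N::finite \<Rightarrow> nat) \<Rightarrow> nat \<Rightarrow> (real^'N \<Rightarrow> real^'N) \<Rightarrow> bool" where
  "block_field blk a Y \<longleftrightarrow>
     (\<forall>x. block_proj blk a (Y x) = Y x) \<and> (\<forall>x. Y x = Y (block_proj blk a x))"

lemma deriv_block_input:
  assumes Y: "smooth Y" and b: "\<And>x. Y x = Y (block_proj blk a x)"
  shows "frechet_derivative Y (at x) v = frechet_derivative Y (at (block_proj blk a x)) (block_proj blk a v)"
proof -
  have "((\<lambda>x. Y (block_proj blk a x)) has_derivative
      (\<lambda>v. frechet_derivative Y (at (block_proj blk a x)) (block_proj blk a v))) (at x)"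
    using has_derivative_compose[OF linear_imp_has_derivative[OF linear_block_proj] smooth_has_derivative[OF Y]]
    by simp
  then have "(Y has_derivative (\<lambda>v. frechet_derivative Y (at (block_proj blk a x)) (block_proj blk a v))) (at x)"
    using b by (metis (no_types, lifting) ext)
  from fun_cong[OF frechet_derivative_at[OF this], of v] show ?thesis by simp
qed

lemma deriv_block_input_proj:
  assumes Y: "smooth Y" and b: "\<And>x. Y x = Y (block_proj blk a x)"
  shows "frechet_derivative Y (at x) v = frechet_derivative Y (at x) (block_proj blk a v)"
  using deriv_block_input[OF Y b, of x v] deriv_block_input[OF Y b, of x "block_proj blk a v"]
  by (simp add: block_proj_idem)

lemma deriv_block_output:
  assumes Y: "smooth Y" and b: "\<And>x. block_proj blk a (Y x) = Y x"
  shows "block_proj blk a (frechet_derivative Y (at x) v) = frechet_derivative Y (at x) v"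
proof -
  have "((\<lambda>x. block_proj blk a (Y x)) has_derivative (\<lambda>v. block_proj blk a (frechet_derivative Y (at x) v))) (at x)"
    using has_derivative_compose[OF smooth_has_derivative[OF Y] linear_imp_has_derivative[OF linear_block_proj]] .
  then have "(Y has_derivative (\<lambda>v. block_proj blk a (frechet_derivative Y (at x) v))) (at x)"
    using b by simp
  from fun_cong[OF frechet_derivative_at[OF this], of v] show ?thesis by simp
qed

lemma bracket_block_field:
  assumes Y: "smooth Y" "block_field blk a Y" and Z: "smooth Z" "block_field blk a Z"
  shows "block_field blk a (lie_bracket Y Z)"
proof -
  have Yo: "\<And>x. block_proj blk a (Y x) = Y x" and Yi: "\<And>x. Y x = Y (block_proj blk a x)"
    and Zo: "\<And>x. block_proj blk a (Z x) = Z x" and Zi: "\<And>x. Z x = Z (block_proj blk a x)"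
    using Y Z unfolding block_field_def by auto
  have "block_proj blk a (lie_bracket Y Z x) = lie_bracket Y Z x" for x
    unfolding lie_bracket_def linear_diff[OF linear_block_proj]
    using deriv_block_output[OF Z(1) Zo] deriv_block_output[OF Y(1) Yo] by simp
  moreover have "lie_bracket Y Z x = lie_bracket Y Z (block_proj blk a x)" for x
    using deriv_block_input[OF Z(1) Zi, of x "Y x"] deriv_block_input[OF Y(1) Yi, of x "Z x"]
    unfolding lie_bracket_def by (metis Yo Yi Zo Zi)
  ultimately show ?thesis unfolding block_field_def by blast
qed

lemma bracket_different_blocks:
  assumes Y: "smooth Y" "block_field blk a Y" and Z: "smooth Z" "block_field blk b Z" and ab: "a \<noteq> b"
  shows "lie_bracket Y Z x = 0"
proof -
  have "frechet_derivative Z (at x) (Y x) = frechet_derivative Z (at x) (block_proj blk b (block_proj blk a (Y x)))"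
    using deriv_block_input_proj[OF Z(1), of blk b x "Y x"] Y(2) Z(2) unfolding block_field_def by metis
  moreover have "frechet_derivative Y (at x) (Z x) = frechet_derivative Y (at x) (block_proj blk a (block_proj blk b (Z x)))"
    using deriv_block_input_proj[OF Y(1), of blk a x "Z x"] Y(2) Z(2) unfolding block_field_def by metis
  ultimately show ?thesis unfolding lie_bracket_def using ab
    by (simp add: block_proj_orthogonal linear_0[OF smooth_linear_deriv[OF Y(1)]] linear_0[OF smooth_linear_deriv[OF Z(1)]])
qed

lemma frechet_derivative_sum:
  assumes "finite A" "\<And>a. a \<in> A \<Longrightarrow> smooth (Y a)"
  shows "frechet_derivative (\<lambda>x. \<Sum>a\<in>A. Y a x) (at x) v = (\<Sum>a\<in>A. frechet_derivative (Y a) (at x) v)"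
proof -
  have "((\<lambda>x. \<Sum>a\<in>A. Y a x) has_derivative (\<lambda>v. \<Sum>a\<in>A. frechet_derivative (Y a) (at x) v)) (at x)"
    by (intro has_derivative_sum smooth_has_derivative assms(2))
  from fun_cong[OF frechet_derivative_at[OF this], of v] show ?thesis by simp
qed

lemma bracket_sum:
  assumes A: "finite A" and Y: "\<And>a. a \<in> A \<Longrightarrow> smooth (Y a)" and Z: "\<And>a. a \<in> A \<Longrightarrow> smooth (Z a)"
  shows "lie_bracket (\<lambda>x. \<Sum>a\<in>A. Y a x) (\<lambda>x. \<Sum>b\<in>A. Z b x) x = (\<Sum>a\<in>A. \<Sum>b\<in>A. lie_bracket (Y a) (Z b) x)"
proof -
  have "lie_bracket (\<lambda>x. \<Sum>a\<in>A. Y a x) (\<lambda>x. \<Sum>b\<in>A. Z b x) x =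
    (\<Sum>b\<in>A. frechet_derivative (Z b) (at x) (\<Sum>a\<in>A. Y a x)) -
    (\<Sum>a\<in>A. frechet_derivative (Y a) (at x) (\<Sum>b\<in>A. Z b x))"
    unfolding lie_bracket_def using frechet_derivative_sum[OF A Z] frechet_derivative_sum[OF A Y] by simp
  also have "\<dots> = (\<Sum>b\<in>A. \<Sum>a\<in>A. frechet_derivative (Z b) (at x) (Y a x)) -
    (\<Sum>a\<in>A. \<Sum>b\<in>A. frechet_derivative (Y a) (at x) (Z b x))"
    by (intro arg_cong2[where f = "(-)"] sum.cong refl linear_sum smooth_linear_deriv Z Y)
  also have "\<dots> = (\<Sum>a\<in>A. \<Sum>b\<in>A. frechet_derivative (Z b) (at x) (Y a x) - frechet_derivative (Y a) (at x) (Z b x))"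
    by (subst sum.swap) (simp only: sum_subtractf)
  finally show ?thesis unfolding lie_bracket_def .
qed

lemma VX_block_field:
  assumes tb: "tdep_vector_field (Xs a)" "block_tdep_field blk a (Xs a)" and Y: "Y \<in> VX (Xs a)"
  shows "smooth Y \<and> block_field blk a Y"
  using Y unfolding VX_def
proof (induction Y rule: lie_gen.induct)
  case (base Y)
  then obtain t where Yt: "Y = Xs a t" by blast
  have "block_proj blk a (Xs a t x) = Xs a t x" "Xs a t x = Xs a t (block_proj blk a x)" for x
    using tb(2) unfolding block_tdep_field_def block_proj_def by (auto simp: vec_eq_iff)
  then show ?case unfolding Yt block_field_def using tdep_smooth[OF tb(1)] by blast
next
  case zero
  show ?case unfolding block_field_def using smooth_const linear_0[OF linear_block_proj] by auto
next
  case (add Y Z)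
  then show ?case unfolding block_field_def using smooth_add linear_add[OF linear_block_proj] by metis
next
  case (scale Y c)
  then show ?case unfolding block_field_def using smooth_cscale linear_scale[OF linear_block_proj] by metis
next
  case (bracket Y Z)
  then show ?case using smooth_bracket bracket_block_field by blast
qed

definition family_sums :: "nat \<Rightarrow> (nat \<Rightarrow> ('x \<Rightarrow> 'y::real_vector) set) \<Rightarrow> ('x \<Rightarrow> 'y) set" where
  "family_sums m L = {Z. \<exists>Y. (\<forall>a<m. Y a \<in> L a) \<and> Z = (\<lambda>x. \<Sum>a<m. Y a x)}"

lemma fin_dim_fields_subset: "fin_dim_fields L \<Longrightarrow> L' \<subseteq> L \<Longrightarrow> fin_dim_fields L'"
  unfolding fin_dim_fields_def by blast

lemma fin_dim_family_sums:
  assumes fd: "\<And>a. a < m \<Longrightarrow> fin_dim_fields (L a)"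
  shows "fin_dim_fields (family_sums m L)"
proof -
  have "\<forall>a. \<exists>B. a < m \<longrightarrow> finite B \<and> (\<forall>Y\<in>L a. \<exists>c. Y = (\<lambda>x. \<Sum>b\<in>B. c b *\<^sub>R b x))"
    using fd unfolding fin_dim_fields_def by blast
  from choice[OF this] obtain B where B: "\<And>a. a < m \<Longrightarrow> finite (B a)"
    and span: "\<And>a. a < m \<Longrightarrow> \<forall>Y\<in>L a. \<exists>c. Y = (\<lambda>x. \<Sum>b\<in>B a. c b *\<^sub>R b x)"
    by blast
  define BB where "BB = (\<Union>a<m. B a)"
  have fBB: "finite BB" unfolding BB_def using B by auto
  show ?thesis unfolding fin_dim_fields_def
  proof (intro exI[of _ BB] conjI ballI fBB)
    fix Z assume "Z \<in> family_sums m L"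
    then obtain Y where Y: "\<forall>a<m. Y a \<in> L a" and Z: "Z = (\<lambda>x. \<Sum>a<m. Y a x)"
      unfolding family_sums_def by blast
    have "\<forall>a. \<exists>c. a < m \<longrightarrow> Y a = (\<lambda>x. \<Sum>b\<in>B a. c b *\<^sub>R b x)" using span Y by blast
    from choice[OF this] obtain c where c: "\<And>a. a < m \<Longrightarrow> Y a = (\<lambda>x. \<Sum>b\<in>B a. c a b *\<^sub>R b x)"
      by blast
    have "(\<Sum>b\<in>BB. (\<Sum>a<m. if b \<in> B a then c a b else 0) *\<^sub>R b x) = Z x" for x
    proof -
      have "(\<Sum>b\<in>BB. (\<Sum>a<m. if b \<in> B a then c a b else 0) *\<^sub>R b x) =
          (\<Sum>b\<in>BB. \<Sum>a<m. if b \<in> B a then c a b *\<^sub>R b x else 0)"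
        unfolding scaleR_sum_left by (intro sum.cong refl) simp
      also have "\<dots> = (\<Sum>a<m. \<Sum>b\<in>BB. if b \<in> B a then c a b *\<^sub>R b x else 0)"
        by (rule sum.swap)
      also have "\<dots> = (\<Sum>a<m. \<Sum>b\<in>BB \<inter> B a. c a b *\<^sub>R b x)"
        by (intro sum.cong refl sum.inter_restrict[OF fBB, symmetric])
      also have "\<dots> = (\<Sum>a<m. \<Sum>b\<in>B a. c a b *\<^sub>R b x)"
        by (intro sum.cong refl) (auto simp: BB_def)
      also have "\<dots> = Z x" unfolding Z using c by simp
      finally show ?thesis .
    qed
    then show "\<exists>c. Z = (\<lambda>x. \<Sum>b\<in>BB. c b *\<^sub>R b x)" by (intro exI) (rule ext, rule sym)
  qed
qed

lemma bracket_block_sums: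
  fixes Y1 Y2 :: "nat \<Rightarrow> real^'N::finite \<Rightarrow> real^'N"
  assumes Y1: "\<And>a. a < m \<Longrightarrow> smooth (Y1 a) \<and> block_field blk a (Y1 a)"
    and Y2: "\<And>a. a < m \<Longrightarrow> smooth (Y2 a) \<and> block_field blk a (Y2 a)"
  shows "lie_bracket (\<lambda>x. \<Sum>a<m. Y1 a x) (\<lambda>x. \<Sum>a<m. Y2 a x) x = (\<Sum>a<m. lie_bracket (Y1 a) (Y2 a) x)"
proof -
  have "lie_bracket (\<lambda>x. \<Sum>a<m. Y1 a x) (\<lambda>x. \<Sum>a<m. Y2 a x) x =
      (\<Sum>a<m. \<Sum>b<m. lie_bracket (Y1 a) (Y2 b) x)"
    using Y1 Y2 by (intro bracket_sum) simp_all
  also have "\<dots> = (\<Sum>a<m. \<Sum>b<m. if b = a then lie_bracket (Y1 a) (Y2 a) x else 0)"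
  proof (intro sum.cong refl)
    fix a b assume "a \<in> {..<m}" "b \<in> {..<m}"
    then show "lie_bracket (Y1 a) (Y2 b) x = (if b = a then lie_bracket (Y1 a) (Y2 a) x else 0)"
      using Y1[of a] Y2[of b] bracket_different_blocks[of "Y1 a" blk a "Y2 b" b x] by auto
  qed
  finally show ?thesis by simp
qed

text \<open>Lie(Xh^t) for the direct product Xh is contained in the sums of elements of the
  Lie(X_(a)^t): the generators are such sums, and the sums are closed under brackets by
  the previous lemma.\<close>

lemma VX_direct_product_sums:
  fixes Xs :: "nat \<Rightarrow> real \<Rightarrow> real^'N::finite \<Rightarrow> real^'N"
  assumes tb: "\<And>a. a < m \<Longrightarrow> tdep_vector_field (Xs a) \<and> block_tdep_field blk a (Xs a)"
  shows "VX (direct_product m Xs) \<subseteq> family_sums m (\<lambda>a. VX (Xs a))"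
proof
  have sumI: "Z \<in> family_sums m (\<lambda>a. lie_gen (range (Xs a)))"
    if "\<And>a. a < m \<Longrightarrow> Y a \<in> lie_gen (range (Xs a))" "Z = (\<lambda>x. \<Sum>a<m. Y a x)" for Y Z
    using that unfolding family_sums_def by blast
  fix Z assume "Z \<in> VX (direct_product m Xs)"
  then show "Z \<in> family_sums m (\<lambda>a. VX (Xs a))"
    unfolding VX_def
  proof (induction Z rule: lie_gen.induct)
    case (base Z)
    then obtain t where "Z = (\<lambda>x. \<Sum>a<m. Xs a t x)" unfolding direct_product_def by blast
    then show ?case by (rule sumI[rotated]) (rule lie_gen.base, simp)
  next
    case zero
    show ?case by (rule sumI[of "\<lambda>a x. 0"]) (simp_all add: lie_gen.zero)
  next
    case (add Z1 Z2)
    then obtain Y1 Y2 where "\<forall>a<m. Y1 a \<in> VX (Xs a)" "Z1 = (\<lambda>x. \<Sum>a<m. Y1 a x)"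
      "\<forall>a<m. Y2 a \<in> VX (Xs a)" "Z2 = (\<lambda>x. \<Sum>a<m. Y2 a x)" unfolding family_sums_def VX_def by blast
    then show ?case unfolding VX_def
      by (intro sumI[of "\<lambda>a x. Y1 a x + Y2 a x"] lie_gen.add) (simp_all add: sum.distrib)
  next
    case (scale Z c)
    then obtain Y where "\<forall>a<m. Y a \<in> VX (Xs a)" "Z = (\<lambda>x. \<Sum>a<m. Y a x)"
      unfolding family_sums_def VX_def by blast
    then show ?case unfolding VX_def
      by (intro sumI[of "\<lambda>a x. c *\<^sub>R Y a x"] lie_gen.scale) (simp_all add: scaleR_sum_right)
  next
    case (bracket Z1 Z2)
    then obtain Y1 Y2 where Y1: "\<forall>a<m. Y1 a \<in> VX (Xs a)" "Z1 = (\<lambda>x. \<Sum>a<m. Y1 a x)"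
      and Y2: "\<forall>a<m. Y2 a \<in> VX (Xs a)" "Z2 = (\<lambda>x. \<Sum>a<m. Y2 a x)" unfolding family_sums_def VX_def by blast
    have blocks: "smooth Y \<and> block_field blk a Y" if "a < m" "Y \<in> VX (Xs a)" for a Y
      using VX_block_field tb[OF that(1)] that(2) by blast
    have "lie_bracket Z1 Z2 x = (\<Sum>a<m. lie_bracket (Y1 a) (Y2 a) x)" for x
      unfolding Y1(2) Y2(2) using blocks Y1(1) Y2(1) by (intro bracket_block_sums) auto
    then show ?case using Y1(1) Y2(1) unfolding VX_def
      by (intro sumI[of "\<lambda>a. lie_bracket (Y1 a) (Y2 a)"] lie_gen.bracket) auto
  qed
qed

lemma tdep_direct_product:
  assumes "\<And>a. a < m \<Longrightarrow> tdep_vector_field (Xs a)"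
  shows "tdep_vector_field (direct_product m Xs)"
proof -
  have "smooth (\<lambda>z. \<Sum>a<m. (\<lambda>(t, x). Xs a t x) z)"
    by (rule smooth_sum) (use assms in \<open>auto simp: tdep_vector_field_def\<close>)
  then show ?thesis unfolding tdep_vector_field_def direct_product_def by (simp add: case_prod_beta')
qed

theorem direct_product_lie_system:
  fixes Xs :: "nat \<Rightarrow> real \<Rightarrow> real^'N::finite \<Rightarrow> real^'N"
  assumes tb: "\<And>a. a < m \<Longrightarrow> tdep_vector_field (Xs a) \<and> block_tdep_field blk a (Xs a)"
    and lie: "\<And>a. a < m \<Longrightarrow> lie_system (Xs a)"
  shows "lie_system (direct_product m Xs)"
  unfolding lie_system_def
proof
  show "tdep_vector_field (direct_product m Xs)" using tb by (intro tdep_direct_product) blast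
  have "fin_dim_fields (family_sums m (\<lambda>a. VX (Xs a)))"
    using lie unfolding lie_system_def by (intro fin_dim_family_sums) blast
  then show "fin_dim_fields (VX (direct_product m Xs))"
    using VX_direct_product_sums[OF tb] by (rule fin_dim_fields_subset)
qed

section \<open>The projection theorem\<close>

theorem mainTheorem8:
  fixes X :: "real \<Rightarrow> real^'n::finite \<Rightarrow> real^'n"
    and Phi :: "real^'N::finite \<Rightarrow> real^'n \<Rightarrow> real^'n"
    and blk :: "'N \<Rightarrow> nat" and m :: nat
    and Xs :: "nat \<Rightarrow> real \<Rightarrow> real^'N \<Rightarrow> real^'N"
    and k :: "real^'n"
  assumes msr: "mixed_superposition_rule X Phi blk m Xs"
    and lie: "\<forall>a<m. lie_system (Xs a)"
    and img_open: "open (range (\<lambda>p. Phi p k))"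
    and img_dense: "closure (range (\<lambda>p. Phi p k)) = UNIV"
  shows "lie_system (direct_product m Xs) \<and>
         (\<forall>Z\<in>VX (direct_product m Xs). projectable (\<lambda>p. Phi p k) Z) \<and>
         (\<exists>T. lie_epimorphism T (VX (direct_product m Xs)) (VX X) \<and>
              (\<forall>Z\<in>VX (direct_product m Xs). related_fields (\<lambda>p. Phi p k) Z (T Z)) \<and>
              (\<forall>t. T (direct_product m Xs t) = X t))"
proof -
  have X: "tdep_vector_field X" and Phi: "smooth (\<lambda>(p, k). Phi p k)"
    and factors: "\<And>a. a < m \<Longrightarrow> tdep_vector_field (Xs a) \<and> block_tdep_field blk a (Xs a)"
    using msr unfolding mixed_superposition_rule_def by auto
  obtain U where U: "open U" "closure U = UNIV"
    and sol: "\<And>I x. is_solution (direct_product m Xs) I x \<Longrightarrow> x ` I \<subseteq> U \<Longrightarrow>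
        is_solution X I (\<lambda>t. Phi (x t) k)"
    using msr unfolding mixed_superposition_rule_def by blast
  have product: "lie_system (direct_product m Xs)"
    using factors lie by (intro direct_product_lie_system) auto
  then have Xh: "tdep_vector_field (direct_product m Xs)" unfolding lie_system_def by blast
  have F: "smooth (\<lambda>p. Phi p k)" using Phi by (rule smooth_freeze_parameter)
  interpret related_tdep_fields "\<lambda>p. Phi p k" "direct_product m Xs" X
    using F Xh X img_dense superposition_related[OF Xh X F U sol] by unfold_locales
  have "\<forall>Z\<in>VX (direct_product m Xs). projectable (\<lambda>p. Phi p k) Z"
    using push_forward_related smooth_VX[OF X] unfolding projectable_def vector_field_def by blast
  then show ?thesis
    using product push_forward_lie_epimorphism push_forward_related(2) push_forward_generator by blast
qed

end
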